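(* Let $E_1$, $E_2$ be para-Hilbert spaces and $A=(X_A,H_A,Y_A)\colon E_1\to E_2$ a morphism. Define $X_A^*:=J_{E_1}^{-1}\,Y_A'\,J_{E_2}$. Then $X_A^*$ is a continuous linear operator from $X_{E_2}$ to $X_{E_1}$ and $g_{E_1}(X_A^*u_2,u_1)=g_{E_2}(u_2,X_Au_1)$ for all $u_1\in X_{E_1}$ and $u_2\in X_{E_2}$.
   Context: A para-Hilbert space $E$ consists of Banach spaces $X_E,Y_E$, a Hilbert space $H_E$ with inner product $\langle\cdot,\cdot\rangle_{H_E}$ and Riesz isomorphism $I_E\colon H_E\to H_E'$, bounded linear injections with dense image $i_E\colon X_E\to H_E$, $j_E\colon H_E\to Y_E$, and an isomorphism of Banach spaces $J_E\colon X_E\to Y_E'$ such that $j_E'\circ J_E=I_E\circ i_E$ ($'$ denotes duals and dual operators). Its pre-Hilbert metric is $g_E(x_1,x_2)=\langle i_Ex_1,i_Ex_2\rangle_{H_E}$ for $x_1,x_2\in X_E$. A morphism $A\colon E_1\to E_2$ is a triple of bounded linear operators $X_A\colon X_{E_1}\to X_{E_2}$, $H_A\colon H_{E_1}\to H_{E_2}$, $Y_A\colon Y_{E_1}\to Y_{E_2}$ with $i_{E_2}X_A=H_Ai_{E_1}$ and $j_{E_2}H_A=Y_Aj_{E_1}$. *)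

theory Defs
  imports "HOL-Analysis.Analysis"
begin

definition dual_op :: "('a::real_normed_vector \<Rightarrow> 'b::real_normed_vector)
    \<Rightarrow> ('b \<Rightarrow>\<^sub>L real) \<Rightarrow> ('a \<Rightarrow>\<^sub>L real)" where
  "dual_op T = (\<lambda>\<phi>. Blinfun (\<lambda>a. blinfun_apply \<phi> (T a)))"

definition riesz :: "'h::real_inner \<Rightarrow> ('h \<Rightarrow>\<^sub>L real)" where
  "riesz h = Blinfun (\<lambda>k. inner h k)"

definition banach_iso :: "('a::real_normed_vector \<Rightarrow> 'b::real_normed_vector) \<Rightarrow> bool" where
  "banach_iso f \<longleftrightarrow> bounded_linear f \<and> bij f \<and> bounded_linear (inv f)"

text \<open>Para-Hilbert space (X, H, Y, i, j, J): X, Y Banach spaces (types of class banach),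
  H a real Hilbert space (type of class real_inner + complete_space).\<close>
definition para_hilbert ::
  "('x::banach \<Rightarrow> 'h::{real_inner,complete_space}) \<Rightarrow> ('h \<Rightarrow> 'y::banach)
     \<Rightarrow> ('x \<Rightarrow> ('y \<Rightarrow>\<^sub>L real)) \<Rightarrow> bool" where
  "para_hilbert i j J \<longleftrightarrow>
     bounded_linear i \<and> inj i \<and> closure (range i) = UNIV \<and>
     bounded_linear j \<and> inj j \<and> closure (range j) = UNIV \<and>
     banach_iso J \<and>
     (\<forall>x. dual_op j (J x) = riesz (i x))"

definition phmetric :: "('x \<Rightarrow> 'h::real_inner) \<Rightarrow> 'x \<Rightarrow> 'x \<Rightarrow> real" where
  "phmetric i x1 x2 = inner (i x1) (i x2)"

definition ph_morphism ::
  "('x1::banach \<Rightarrow> 'h1::{real_inner,complete_space}) \<Rightarrow> ('h1 \<Rightarrow> 'y1::banach)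
   \<Rightarrow> ('x2::banach \<Rightarrow> 'h2::{real_inner,complete_space}) \<Rightarrow> ('h2 \<Rightarrow> 'y2::banach)
   \<Rightarrow> ('x1 \<Rightarrow> 'x2) \<Rightarrow> ('h1 \<Rightarrow> 'h2) \<Rightarrow> ('y1 \<Rightarrow> 'y2) \<Rightarrow> bool" where
  "ph_morphism i1 j1 i2 j2 XA HA YA \<longleftrightarrow>
     bounded_linear XA \<and> bounded_linear HA \<and> bounded_linear YA \<and>
     (\<forall>x. i2 (XA x) = HA (i1 x)) \<and> (\<forall>h. j2 (HA h) = YA (j1 h))"

end

theory Submission
  imports Defs
begin

text \<open>The adjoint is transported along the isomorphisms \<open>J\<close>: by the compatibility
  \<open>j' J = I i\<close> the functional \<open>J x\<close> evaluated on \<open>j h\<close> is the inner product \<open>\<langle>i x, h\<rangle>\<close>.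
  Hence \<open>g\<^sub>1(X\<^sub>A\<^sup>* u\<^sub>2, u\<^sub>1)\<close> is \<open>J\<^sub>2 u\<^sub>2\<close> evaluated on \<open>Y\<^sub>A (j\<^sub>1 (i\<^sub>1 u\<^sub>1)) = j\<^sub>2 (H\<^sub>A (i\<^sub>1 u\<^sub>1)) = j\<^sub>2 (i\<^sub>2 (X\<^sub>A u\<^sub>1))\<close>,
  which is \<open>g\<^sub>2(u\<^sub>2, X\<^sub>A u\<^sub>1)\<close>.\<close>

lemma dual_op_eq_blinfun_compose:
  assumes "bounded_linear T"
  shows "dual_op T \<phi> = \<phi> o\<^sub>L Blinfun T"
proof -
  have "bounded_linear (\<lambda>a. blinfun_apply \<phi> (T a))"
    using bounded_linear_compose[OF blinfun.bounded_linear_right assms, of \<phi>] by simp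
  then show ?thesis
    unfolding dual_op_def
    by (intro blinfun_eqI) (simp add: bounded_linear_Blinfun_apply assms)
qed

lemma dual_op_apply:
  assumes "bounded_linear T"
  shows "blinfun_apply (dual_op T \<phi>) a = blinfun_apply \<phi> (T a)"
  by (simp add: dual_op_eq_blinfun_compose[OF assms] bounded_linear_Blinfun_apply assms)

lemma bounded_linear_dual_op:
  assumes "bounded_linear T"
  shows "bounded_linear (dual_op T)"
  using bounded_bilinear.bounded_linear_left[OF bounded_bilinear_blinfun_compose]
  by (simp add: dual_op_eq_blinfun_compose[OF assms, abs_def])

lemma riesz_apply: "blinfun_apply (riesz h) k = inner h k"
  unfolding riesz_def
  by (simp add: bounded_linear_Blinfun_apply bounded_linear_inner_right)

lemma para_hilbert_pairing:
  assumes "para_hilbert i j J"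
  shows "blinfun_apply (J x) (j h) = inner (i x) h"
proof -
  from assms have "bounded_linear j" and "dual_op j (J x) = riesz (i x)"
    unfolding para_hilbert_def by auto
  then show ?thesis
    by (metis dual_op_apply riesz_apply)
qed

definition ph_adjoint ::
  "('x1::real_normed_vector \<Rightarrow> ('y1::real_normed_vector \<Rightarrow>\<^sub>L real)) \<Rightarrow> ('y1 \<Rightarrow> 'y2::real_normed_vector)
     \<Rightarrow> ('x2 \<Rightarrow> ('y2 \<Rightarrow>\<^sub>L real)) \<Rightarrow> 'x2 \<Rightarrow> 'x1" where
  "ph_adjoint J1 YA J2 = inv J1 \<circ> dual_op YA \<circ> J2"

lemma bounded_linear_ph_adjoint:
  assumes "bounded_linear (inv J1)" "bounded_linear YA" "bounded_linear J2"
  shows "bounded_linear (ph_adjoint J1 YA J2)"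
  using assms bounded_linear_dual_op[OF assms(2)]
  unfolding ph_adjoint_def
  by (intro bounded_linear_compose[unfolded o_def[symmetric]]) auto

lemma ph_adjoint_transport:
  assumes "surj J1"
  shows "J1 (ph_adjoint J1 YA J2 u) = dual_op YA (J2 u)"
  using assms unfolding ph_adjoint_def
  by (simp add: surj_f_inv_f)

lemma phmetric_ph_adjoint:
  assumes E1: "para_hilbert i1 j1 J1" and E2: "para_hilbert i2 j2 J2"
    and A: "ph_morphism i1 j1 i2 j2 XA HA YA"
  shows "phmetric i1 (ph_adjoint J1 YA J2 u2) u1 = phmetric i2 u2 (XA u1)"
proof -
  from A have YA: "bounded_linear YA"
    and XA: "i2 (XA u1) = HA (i1 u1)" and HA: "j2 (HA (i1 u1)) = YA (j1 (i1 u1))"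
    unfolding ph_morphism_def by auto
  from E1 have J1: "surj J1"
    unfolding para_hilbert_def banach_iso_def by (auto simp: bij_is_surj)
  have "phmetric i1 (ph_adjoint J1 YA J2 u2) u1
      = blinfun_apply (J1 (ph_adjoint J1 YA J2 u2)) (j1 (i1 u1))"
    by (simp add: phmetric_def para_hilbert_pairing[OF E1])
  also have "\<dots> = blinfun_apply (J2 u2) (YA (j1 (i1 u1)))"
    by (simp add: ph_adjoint_transport[OF J1] dual_op_apply[OF YA])
  also have "\<dots> = blinfun_apply (J2 u2) (j2 (i2 (XA u1)))"
    by (simp add: XA HA)
  also have "\<dots> = phmetric i2 u2 (XA u1)"
    by (simp add: phmetric_def para_hilbert_pairing[OF E2])
  finally show ?thesis .
qed

theorem proposition2p10:
  fixes i1 :: "'x1::banach \<Rightarrow> 'h1::{real_inner,complete_space}"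
    and j1 :: "'h1 \<Rightarrow> 'y1::banach"
    and J1 :: "'x1 \<Rightarrow> ('y1 \<Rightarrow>\<^sub>L real)"
    and i2 :: "'x2::banach \<Rightarrow> 'h2::{real_inner,complete_space}"
    and j2 :: "'h2 \<Rightarrow> 'y2::banach"
    and J2 :: "'x2 \<Rightarrow> ('y2 \<Rightarrow>\<^sub>L real)"
    and XA :: "'x1 \<Rightarrow> 'x2" and HA :: "'h1 \<Rightarrow> 'h2" and YA :: "'y1 \<Rightarrow> 'y2"
  assumes "para_hilbert i1 j1 J1"
    and "para_hilbert i2 j2 J2"
    and "ph_morphism i1 j1 i2 j2 XA HA YA"
  defines "XAstar \<equiv> inv J1 \<circ> dual_op YA \<circ> J2"
  shows "bounded_linear XAstar \<and>
         (\<forall>u1 u2. phmetric i1 (XAstar u2) u1 = phmetric i2 u2 (XA u1))"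
proof -
  have XAstar: "XAstar = ph_adjoint J1 YA J2"
    by (simp add: XAstar_def ph_adjoint_def)
  have "bounded_linear (inv J1)" "bounded_linear YA" "bounded_linear J2"
    using assms(1-3) unfolding para_hilbert_def ph_morphism_def banach_iso_def by auto
  then have "bounded_linear XAstar"
    unfolding XAstar by (rule bounded_linear_ph_adjoint)
  then show ?thesis
    using phmetric_ph_adjoint[OF assms(1-3)] by (simp add: XAstar)
qed

end
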